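(* Let $\tilde\omega$ be the normal Cartan connection (the unique adapted Cartan connection whose curvature function takes values in $\tilde N$), let $(X_1,X_2)$ be an oriented orthonormal frame on $U$ with associated $X_3$, structure functions $c,c^2_{13},c^1_{23},c^1_{12},c^2_{12}$ and dual coframe $(\theta_1,\theta_2,\theta_3)$, and let $s=(X_1,X_2)$ be the corresponding section. Then $s^*\tilde\omega=e_1\otimes\theta_1+e_2\otimes\theta_2+e_3\otimes\theta_3+e_4\otimes(\beta_1\theta_1+\beta_2\theta_2+\beta_3\theta_3)$ with $\beta_1=c^1_{12}$, $\beta_2=-c^2_{12}$, $\beta_3=(c^2_{12})^2-(c^1_{12})^2-X_1(c^2_{12})-X_2(c^1_{12})$, and the pulled back curvature $\Omega=d\omega+\frac12[\omega,\omega]$, $\omega=s^*\tilde\omega$, has components $\Omega_1=-c\,\theta_1\wedge\theta_3-(c^1_{23}+\beta_3)\theta_2\wedge\theta_3$, $\Omega_2=-(c^2_{13}+\beta_3)\theta_1\wedge\theta_3+c\,\theta_2\wedge\theta_3$, $\Omega_3=0$ (where $\Omega=\sum_ie_i\otimes\Omega_i$).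
   Context: Setting: 3-dimensional ts-oriented contact sub-Lorentzian manifold $(M,H,g)$. Oriented orthonormal frame: $g(X_1,X_1)=-1$, $g(X_1,X_2)=0$, $g(X_2,X_2)=1$, orientation compatible. With $\eta$ the contact form vanishing on $H$ and $\eta([X_2,X_1])=1$, $X_3$ is defined by $\eta(X_3)=-1$, $X_3\lrcorner d\eta=0$; then $[X_1,X_3]=cX_1+c^2_{13}X_2$, $[X_2,X_3]=c^1_{23}X_1-cX_2$, $[X_1,X_2]=c^1_{12}X_1+c^2_{12}X_2+X_3$. $\mathfrak{g}$ has basis $e_1,\dots,e_4$ with $[e_1,e_2]=e_3$, $[e_4,e_1]=e_2$, $[e_4,e_2]=e_1$. $\mathcal{G}$ is the $SO^+_{1,1}(\mathbb{R})$-bundle of oriented orthonormal frames; a Cartan connection of type $(\mathfrak{g},\langle e_4\rangle)$ is adapted if for each local section $s=(Y_1,Y_2)$ the frame dual to $(s^*\tilde\omega_1,s^*\tilde\omega_2,s^*\tilde\omega_3)$ is $(Y_1,Y_2,E_3)$ with $E_3\equiv[Y_1,Y_2]\bmod H$. $\tilde N\subset\mathrm{Hom}(\wedge^2\langle e_1,e_2,e_3\rangle,\mathfrak{g})$ is spanned by $e_1\otimes e_1^*\wedge e_3^*\mp e_2\otimes e_2^*\wedge e_3^*$, $e_1\otimes e_2^*\wedge e_3^*$, $e_2\otimes e_1^*\wedge e_3^*$, $e_4\otimes e_1^*\wedge e_3^*$, $e_4\otimes e_2^*\wedge e_3^*$; the curvature function is $\tilde k(X,Y)=\tilde\Omega(\tilde\omega^{-1}X,\tilde\omega^{-1}Y)$.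 *)

theory Defs
  imports "HOL-Analysis.Analysis"
begin

text \<open>Local model: an open set U of the 3-manifold is an open subset of real^3.
  Vector fields are maps real^3 \<Rightarrow> real^3, (real- or g-component-) 1-forms are maps
  p \<mapsto> (linear functional on real^3), 2-forms are maps p \<mapsto> (bilinear form).\<close>

coinductive smooth_on :: "(real^3) set \<Rightarrow> (real^3 \<Rightarrow> 'b::real_normed_vector) \<Rightarrow> bool" where
  "f differentiable_on U \<Longrightarrow> (\<forall>v. smooth_on U (\<lambda>p. frechet_derivative f (at p) v))
     \<Longrightarrow> smooth_on U f"

definition lie :: "(real^3 \<Rightarrow> real^3) \<Rightarrow> (real^3 \<Rightarrow> real^3) \<Rightarrow> real^3 \<Rightarrow> real^3" where
  "lie X Y p = frechet_derivative Y (at p) (X p) - frechet_derivative X (at p) (Y p)"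

definition vder :: "(real^3 \<Rightarrow> real^3) \<Rightarrow> (real^3 \<Rightarrow> real) \<Rightarrow> real^3 \<Rightarrow> real" where
  "vder X f p = frechet_derivative f (at p) (X p)"

text \<open>Exterior derivative of a 1-form (coordinate formula with constant vectors u, v)\<close>
definition d1 :: "(real^3 \<Rightarrow> real^3 \<Rightarrow> real) \<Rightarrow> real^3 \<Rightarrow> real^3 \<Rightarrow> real^3 \<Rightarrow> real" where
  "d1 \<alpha> p u v = frechet_derivative (\<lambda>q. \<alpha> q v) (at p) u - frechet_derivative (\<lambda>q. \<alpha> q u) (at p) v"

definition wedge :: "(real^3 \<Rightarrow> real^3 \<Rightarrow> real) \<Rightarrow> (real^3 \<Rightarrow> real^3 \<Rightarrow> real) \<Rightarrow> real^3 \<Rightarrow> real^3 \<Rightarrow> real^3 \<Rightarrow> real" where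
  "wedge \<alpha> \<beta> p u v = \<alpha> p u * \<beta> p v - \<alpha> p v * \<beta> p u"

text \<open>The Lie algebra g: elements are coefficient functions x :: nat \<Rightarrow> real w.r.t. the basis
  e_1,...,e_4 (only indices 1..4 matter). ebr i j k = k-th coefficient of [e_i,e_j], where
  [e_1,e_2]=e_3, [e_4,e_1]=e_2, [e_4,e_2]=e_1 and all other brackets of basis elements vanish
  (up to antisymmetry).\<close>
definition ebr :: "nat \<Rightarrow> nat \<Rightarrow> nat \<Rightarrow> real" where
  "ebr i j k =
     (if (i,j,k) = (1,2,3) then 1 else if (i,j,k) = (2,1,3) then -1
      else if (i,j,k) = (4,1,2) then 1 else if (i,j,k) = (1,4,2) then -1
      else if (i,j,k) = (4,2,1) then 1 else if (i,j,k) = (2,4,1) then -1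
      else 0)"

definition gbr :: "(nat \<Rightarrow> real) \<Rightarrow> (nat \<Rightarrow> real) \<Rightarrow> nat \<Rightarrow> real" where
  "gbr x y k = (\<Sum>i\<in>{1..4}. \<Sum>j\<in>{1..4}. x i * y j * ebr i j k)"

text \<open>A g-valued 1-form is given by its components \<omega> k (k = 1..4), \<omega> = sum_k e_k \<otimes> \<omega> k.
  Curvature \<Omega> = d\<omega> + 1/2[\<omega>,\<omega>], where 1/2[\<omega>,\<omega>](u,v) = [\<omega>(u),\<omega>(v)]; k-th component:\<close>
definition curv :: "(nat \<Rightarrow> real^3 \<Rightarrow> real^3 \<Rightarrow> real) \<Rightarrow> nat \<Rightarrow> real^3 \<Rightarrow> real^3 \<Rightarrow> real^3 \<Rightarrow> real" where
  "curv \<omega> k p u v = d1 (\<omega> k) p u v + gbr (\<lambda>j. \<omega> j p u) (\<lambda>j. \<omega> j p v) k"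

text \<open>Elements of Hom(wedge^2 <e1,e2,e3>, g) are represented by \<phi> i j m = m-th coefficient of
  \<phi>(e_i,e_j) (i,j \<in> {1,2,3}, m \<in> {1..4}). elt k a b is e_k \<otimes> e_a^* \<and> e_b^*.\<close>
definition elt :: "nat \<Rightarrow> nat \<Rightarrow> nat \<Rightarrow> nat \<Rightarrow> nat \<Rightarrow> nat \<Rightarrow> real" where
  "elt k a b = (\<lambda>i j m. (if m = k then 1 else 0) *
       ((if i = a \<and> j = b then 1 else 0) - (if i = b \<and> j = a then 1 else 0)))"

definition Ntilde :: "(nat \<Rightarrow> nat \<Rightarrow> nat \<Rightarrow> real) set" where
  "Ntilde = {\<phi>. \<exists>a1 a2 a3 a4 a5::real. \<forall>i\<in>{1..3}. \<forall>j\<in>{1..3}. \<forall>m\<in>{1..4}.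
      \<phi> i j m = a1 * (elt 1 1 3 i j m - elt 2 2 3 i j m) + a2 * elt 1 2 3 i j m
               + a3 * elt 2 1 3 i j m + a4 * elt 4 1 3 i j m + a5 * elt 4 2 3 i j m}"

text \<open>Curvature function along the section: k(e_i,e_j) = \<Omega>(F_i,F_j), with (F_1,F_2,F_3)
  the frame dual to (\<omega>_1,\<omega>_2,\<omega>_3).\<close>
definition curvfun :: "(nat \<Rightarrow> real^3 \<Rightarrow> real^3 \<Rightarrow> real) \<Rightarrow> (nat \<Rightarrow> real^3 \<Rightarrow> real^3) \<Rightarrow> real^3
      \<Rightarrow> nat \<Rightarrow> nat \<Rightarrow> nat \<Rightarrow> real" where
  "curvfun \<omega> F p = (\<lambda>i j m. curv \<omega> m p (F i p) (F j p))"

text \<open>\<omega> is the pullback s^*\<omega>~ along s = (X1,X2) of a normal Cartan connection: a smooth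
  g-valued 1-form on U which is adapted (frame dual to (\<omega>_1,\<omega>_2,\<omega>_3) is (X1,X2,E3) with
  E3 = [X1,X2] mod H) and whose curvature function takes values in N~.\<close>
definition normal_adapted ::
  "(real^3) set \<Rightarrow> (nat \<Rightarrow> real^3 \<Rightarrow> real^3 \<Rightarrow> real) \<Rightarrow> (real^3 \<Rightarrow> real^3) \<Rightarrow> (real^3 \<Rightarrow> real^3) \<Rightarrow> bool"
  where
  "normal_adapted U \<omega> X1 X2 \<longleftrightarrow>
     (\<forall>k\<in>{1..4}. \<forall>p\<in>U. linear (\<omega> k p)) \<and>
     (\<forall>k\<in>{1..4}. \<forall>v. smooth_on U (\<lambda>p. \<omega> k p v)) \<and>
     (\<exists>E3. \<forall>p\<in>U.
        (\<forall>k\<in>{1,2,3}. \<omega> k p (X1 p) = (if k = 1 then 1 else 0)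
                     \<and> \<omega> k p (X2 p) = (if k = 2 then 1 else 0)
                     \<and> \<omega> k p (E3 p) = (if k = 3 then 1 else 0)) \<and>
        E3 p - lie X1 X2 p \<in> span {X1 p, X2 p} \<and>
        curvfun \<omega> (\<lambda>i. if i = 1 then X1 else if i = 2 then X2 else E3) p \<in> Ntilde)"

end

theory Submission
  imports Defs
begin

(* In the frame (X1, X2, X3) the adapted connection satisfies omega_k(X_j) = delta_kj for
   j = 1, 2 and k = 1, 2, 3, and E3 differs from X3 by an element of span {X1, X2}.  Since Omega is
   alternating, the normalization Omega_3(X1, E3) = Omega_3(X2, E3) = 0 becomes
   Omega_3(X1, X3) = Omega_3(X2, X3) = 0, and Cartan's formula
   d alpha(X, Y) = X(alpha Y) - Y(alpha X) - alpha [X, Y] turns these into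
   omega_2(X3) = omega_1(X3) = 0, so (omega_1, omega_2, omega_3) is the coframe theta.
   Then Omega(X1, X2) = 0 read off in components 1, 2 and 4 of the structure equations
   Omega_1 = d omega_1 + omega_4 wedge omega_2, Omega_2 = d omega_2 + omega_4 wedge omega_1,
   Omega_4 = d omega_4 yields omega_4 on X1, X2 and X3, i.e. beta_1, beta_2, beta_3, and the
   remaining values Omega_k(X_i, X3) are then explicit; bilinearity expands Omega in the
   coframe. *)

lemma smooth_on_differentiable_at:
  assumes "smooth_on U f" "open U" "p \<in> U"
  shows "f differentiable (at p)"
  using assms(1) by cases (use assms in \<open>auto simp: differentiable_on_eq_differentiable_at\<close>)

lemma linear_axis_expansion:
  assumes "linear L"
  shows "L (v::real^'n) = (\<Sum>i\<in>UNIV. v$i * L (axis i 1))"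
proof -
  have "L v = L (\<Sum>i\<in>UNIV. v$i *\<^sub>R axis i 1)"
    using basis_expansion[of v] by (simp add: scalar_mult_eq_scaleR)
  then show ?thesis
    by (simp add: linear_sum[OF assms] linear_scale[OF assms])
qed

lemma has_derivative_one_form_apply:
  fixes \<alpha> :: "'a::real_normed_vector \<Rightarrow> real^'n \<Rightarrow> real" and Y :: "'a \<Rightarrow> real^'n"
  assumes "open U" "p \<in> U" "\<forall>q\<in>U. linear (\<alpha> q)" "\<And>v. (\<lambda>q. \<alpha> q v) differentiable (at p)"
    and "(Y has_derivative DY) (at p)"
  shows "((\<lambda>q. \<alpha> q (Y q)) has_derivative
           (\<lambda>h. \<Sum>i\<in>UNIV. Y p $ i * frechet_derivative (\<lambda>q. \<alpha> q (axis i 1)) (at p) h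
                          + DY h $ i * \<alpha> p (axis i 1))) (at p)"
proof -
  have D\<alpha>: "((\<lambda>q. \<alpha> q (axis i 1)) has_derivative frechet_derivative (\<lambda>q. \<alpha> q (axis i 1)) (at p))
          (at p)" for i
    using assms(4) frechet_derivative_works by blast
  have DY: "((\<lambda>q. Y q $ i) has_derivative (\<lambda>h. DY h $ i)) (at p)" for i
    by (rule bounded_linear.has_derivative[OF bounded_linear_vec_nth assms(5)])
  have "((\<lambda>q. \<Sum>i\<in>UNIV. Y q $ i * \<alpha> q (axis i 1)) has_derivative
           (\<lambda>h. \<Sum>i\<in>UNIV. Y p $ i * frechet_derivative (\<lambda>q. \<alpha> q (axis i 1)) (at p) h
                          + DY h $ i * \<alpha> p (axis i 1))) (at p)"
    by (intro has_derivative_sum has_derivative_mult D\<alpha> DY)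
  then show ?thesis
    by (rule has_derivative_transform_within_open[OF _ assms(1,2)])
       (use assms(3) linear_axis_expansion[symmetric] in auto)
qed

lemma differentiable_one_form_apply:
  fixes \<alpha> :: "'a::real_normed_vector \<Rightarrow> real^'n \<Rightarrow> real"
  assumes "open U" "p \<in> U" "\<forall>q\<in>U. linear (\<alpha> q)" "\<And>v. (\<lambda>q. \<alpha> q v) differentiable (at p)"
    and "Y differentiable (at p)"
  shows "(\<lambda>q. \<alpha> q (Y q)) differentiable (at p)"
  using has_derivative_one_form_apply[OF assms(1-4) assms(5)[unfolded frechet_derivative_works]]
  by (rule differentiableI)

lemma frechet_derivative_one_form_axis_expansion:
  fixes \<alpha> :: "'a::real_normed_vector \<Rightarrow> real^'n \<Rightarrow> real"
  assumes "open U" "p \<in> U" "\<forall>q\<in>U. linear (\<alpha> q)" "\<And>v. (\<lambda>q. \<alpha> q v) differentiable (at p)"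
  shows "frechet_derivative (\<lambda>q. \<alpha> q w) (at p) h
           = (\<Sum>i\<in>UNIV. w$i * frechet_derivative (\<lambda>q. \<alpha> q (axis i 1)) (at p) h)"
  using fun_cong[OF frechet_derivative_at[OF has_derivative_one_form_apply[OF assms
        has_derivative_const[of w]]], of h]
  by simp

lemma d1_axis_expansion:
  assumes "open U" "p \<in> U" "\<forall>q\<in>U. linear (\<alpha> q)" "\<And>v. (\<lambda>q. \<alpha> q v) differentiable (at p)"
  shows "d1 \<alpha> p u v = (\<Sum>i\<in>UNIV. v$i * frechet_derivative (\<lambda>q. \<alpha> q (axis i 1)) (at p) u
                                   - u$i * frechet_derivative (\<lambda>q. \<alpha> q (axis i 1)) (at p) v)"
  unfolding d1_def frechet_derivative_one_form_axis_expansion[OF assms, where w = u]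
    frechet_derivative_one_form_axis_expansion[OF assms, where w = v]
  by (simp only: sum_subtractf)

lemma bilinear_d1:
  assumes "open U" "p \<in> U" "\<forall>q\<in>U. linear (\<alpha> q)" "\<And>v. (\<lambda>q. \<alpha> q v) differentiable (at p)"
  shows "bilinear (d1 \<alpha> p)"
proof -
  have in_direction: "linear (frechet_derivative (\<lambda>q. \<alpha> q w) (at p))" for w
    using assms(4) frechet_derivative_works has_derivative_linear by blast
  have in_argument: "linear (\<lambda>w. frechet_derivative (\<lambda>q. \<alpha> q w) (at p) h)" for h
  proof -
    have expansion: "(\<lambda>w. frechet_derivative (\<lambda>q. \<alpha> q w) (at p) h)
            = (\<lambda>w. \<Sum>i\<in>UNIV. w$i * frechet_derivative (\<lambda>q. \<alpha> q (axis i 1)) (at p) h)"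
      by (rule ext, rule frechet_derivative_one_form_axis_expansion[OF assms])
    show ?thesis
      unfolding expansion linear_iff by (simp add: sum.distrib sum_distrib_left algebra_simps)
  qed
  show ?thesis
    unfolding bilinear_def d1_def
    using in_direction in_argument by (auto intro: linear_compose_sub)
qed

lemma d1_cartan:
  fixes \<alpha> :: "real^3 \<Rightarrow> real^3 \<Rightarrow> real"
  assumes "open U" "p \<in> U" "\<forall>q\<in>U. linear (\<alpha> q)" "\<And>v. (\<lambda>q. \<alpha> q v) differentiable (at p)"
    and "X differentiable (at p)" "Y differentiable (at p)"
  shows "d1 \<alpha> p (X p) (Y p)
           = vder X (\<lambda>q. \<alpha> q (Y q)) p - vder Y (\<lambda>q. \<alpha> q (X q)) p - \<alpha> p (lie X Y p)"
proof -
  define D where "D i = frechet_derivative (\<lambda>q. \<alpha> q (axis i 1)) (at p)" for i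
  define DX where "DX = frechet_derivative X (at p)"
  define DY where "DY = frechet_derivative Y (at p)"
  have vder_apply: "vder Z (\<lambda>q. \<alpha> q (W q)) p
      = (\<Sum>i\<in>UNIV. W p $ i * D i (Z p) + frechet_derivative W (at p) (Z p) $ i * \<alpha> p (axis i 1))"
    if "W differentiable (at p)" for Z W
    using fun_cong[OF frechet_derivative_at[OF has_derivative_one_form_apply[OF assms(1-4)
          that[unfolded frechet_derivative_works]]], of "Z p"]
    by (simp add: vder_def D_def)
  have lie_expansion: "\<alpha> p (lie X Y p) = (\<Sum>i\<in>UNIV. (DY (X p) $ i - DX (Y p) $ i) * \<alpha> p (axis i 1))"
    using linear_axis_expansion[of "\<alpha> p" "lie X Y p"] assms(2,3)
    by (simp add: lie_def DX_def DY_def)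
  have d1_expansion: "d1 \<alpha> p (X p) (Y p) = (\<Sum>i\<in>UNIV. Y p $ i * D i (X p) - X p $ i * D i (Y p))"
    unfolding D_def by (rule d1_axis_expansion[OF assms(1-4)])
  show ?thesis
    unfolding d1_expansion lie_expansion vder_apply[OF assms(5)] vder_apply[OF assms(6)] DX_def DY_def
    unfolding left_diff_distrib sum_subtractf sum.distrib by linarith
qed

lemma vder_transform_within_open:
  assumes "f differentiable (at p)" "open U" "p \<in> U" "\<And>q. q \<in> U \<Longrightarrow> f q = g q"
  shows "vder X f p = vder X g p"
  unfolding vder_def using frechet_derivative_transform_within_open[OF assms] by simp

lemma vder_minus:
  assumes "f differentiable (at p)"
  shows "vder X (\<lambda>q. - f q) p = - vder X f p"
  using frechet_derivative_at[OF has_derivative_minus[OF assms[unfolded frechet_derivative_works]],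
      symmetric]
  by (simp add: vder_def)

lemma bilinear_add:
  "bilinear f \<Longrightarrow> bilinear g \<Longrightarrow> bilinear (\<lambda>u v. f u v + g u v)"
  by (simp add: bilinear_def linear_compose_add)

lemma bilinear_alternating_antisym:
  assumes "bilinear B" "\<And>u. B u u = 0"
  shows "B y x = - B x y"
  using assms(2)[of "x + y"] assms(2)[of x] assms(2)[of y]
  by (simp add: bilinear_ladd[OF assms(1)] bilinear_radd[OF assms(1)] eq_neg_iff_add_eq_0)

lemma span_pairE:
  assumes "w \<in> span {x, y}"
  obtains a b where "w = a *\<^sub>R x + b *\<^sub>R y"
  using assms by (auto simp: span_insert span_singleton) (metis add.commute diff_add_cancel)

lemma bilinear_alternating_span_invariant:
  assumes "bilinear B" "\<And>u. B u u = 0" "B x y = 0" "w - z \<in> span {x, y}"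
  shows "B x w = B x z" "B y w = B y z"
proof -
  obtain a b where ab: "w - z = a *\<^sub>R x + b *\<^sub>R y" using assms(4) by (rule span_pairE)
  have "B x (w - z) = 0" "B y (w - z) = 0"
    unfolding ab using assms(2,3) bilinear_alternating_antisym[OF assms(1,2), of x y]
    by (simp_all add: bilinear_radd[OF assms(1)] bilinear_rmul[OF assms(1)])
  then show "B x w = B x z" "B y w = B y z"
    by (simp_all add: bilinear_rsub[OF assms(1)])
qed

lemma independent3_spanningE:
  fixes x1 x2 x3 :: "real^3"
  assumes "\<forall>a b d. a *\<^sub>R x1 + b *\<^sub>R x2 + d *\<^sub>R x3 = 0 \<longrightarrow> a = 0 \<and> b = 0 \<and> d = 0"
  obtains s1 s2 s3 where "v = s1 *\<^sub>R x1 + s2 *\<^sub>R x2 + s3 *\<^sub>R x3"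
proof -
  define M where "M = (\<lambda>t::real^3. t$1 *\<^sub>R x1 + t$2 *\<^sub>R x2 + t$3 *\<^sub>R x3)"
  have lM: "linear M" unfolding M_def by (rule linearI) (simp_all add: algebra_simps)
  have "inj M"
  proof (rule injI)
    fix s t assume "M s = M t"
    then have "M (s - t) = 0" using linear_diff[OF lM] by simp
    then have "(s-t)$1 = 0 \<and> (s-t)$2 = 0 \<and> (s-t)$3 = 0" using assms unfolding M_def by blast
    then show "s = t" by (simp add: vec_eq_iff forall_3)
  qed
  then have "surj M" using lM linear_injective_imp_surjective by blast
  then obtain t where "v = M t" by (metis surjD)
  then show ?thesis using that unfolding M_def by blast
qed

lemma sum_atLeastAtMost_1_4: "(\<Sum>i\<in>{1..4::nat}. f i) = f 1 + f 2 + f 3 + f 4"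
  by (simp add: eval_nat_numeral atLeastAtMostSuc_conv ac_simps)

lemma gbr_components:
  "gbr x y 1 = x 4 * y 2 - x 2 * y 4" "gbr x y 2 = x 4 * y 1 - x 1 * y 4"
  "gbr x y 3 = x 1 * y 2 - x 2 * y 1" "gbr x y 4 = 0"
  unfolding gbr_def sum_atLeastAtMost_1_4 by (simp_all add: ebr_def)

lemma gbr_self: "gbr x x k = 0"
  unfolding gbr_def sum_atLeastAtMost_1_4
  by (cases "k = 1"; cases "k = 2"; cases "k = 3") (simp_all add: ebr_def)

lemma bilinear_gbr:
  assumes "\<forall>j\<in>{1..4}. linear (L j)"
  shows "bilinear (\<lambda>u v. gbr (\<lambda>j. L j u) (\<lambda>j. L j v) k)"
proof -
  have l: "linear (L 1)" "linear (L 2)" "linear (L 3)" "linear (L 4)" using assms by auto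
  show ?thesis
    unfolding bilinear_def linear_iff gbr_def sum_atLeastAtMost_1_4
    \<comment> \<open>without \<open>del\<close>, the simp rule \<open>One_nat_def\<close> turns \<open>L 1\<close> into \<open>L (Suc 0)\<close>,
       to which the instances of \<open>linear_add\<close> no longer apply\<close>
    by (simp add: l linear_add linear_scale algebra_simps del: One_nat_def)
qed

lemma curv_structure_equations:
  "curv \<omega> 1 p u v = d1 (\<omega> 1) p u v + wedge (\<omega> 4) (\<omega> 2) p u v"
  "curv \<omega> 2 p u v = d1 (\<omega> 2) p u v + wedge (\<omega> 4) (\<omega> 1) p u v"
  "curv \<omega> 3 p u v = d1 (\<omega> 3) p u v + wedge (\<omega> 1) (\<omega> 2) p u v"
  "curv \<omega> 4 p u v = d1 (\<omega> 4) p u v"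
  unfolding curv_def gbr_components wedge_def by simp_all

lemma curv_self: "curv \<omega> k p u u = 0"
  by (simp add: curv_def d1_def gbr_self)

lemma Ntilde_components:
  assumes "\<phi> \<in> Ntilde"
  shows "m \<in> {1..4} \<Longrightarrow> \<phi> 1 2 m = 0" "\<phi> 1 3 3 = 0" "\<phi> 2 3 3 = 0"
  using assms unfolding Ntilde_def by (auto simp: elt_def)

locale contact_frame =
  fixes U :: "(real^3) set"
    and X1 X2 X3 :: "real^3 \<Rightarrow> real^3"
    and c c213 c123 c112 c212 :: "real^3 \<Rightarrow> real"
    and \<theta> :: "nat \<Rightarrow> real^3 \<Rightarrow> real^3 \<Rightarrow> real"
  assumes U_open: "open U"
    and X_smooth: "smooth_on U X1" "smooth_on U X2" "smooth_on U X3"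
    and frame: "\<forall>p\<in>U. \<forall>a b d. a *\<^sub>R X1 p + b *\<^sub>R X2 p + d *\<^sub>R X3 p = 0 \<longrightarrow> a = 0 \<and> b = 0 \<and> d = 0"
    and br13: "\<forall>p\<in>U. lie X1 X3 p = c p *\<^sub>R X1 p + c213 p *\<^sub>R X2 p"
    and br23: "\<forall>p\<in>U. lie X2 X3 p = c123 p *\<^sub>R X1 p - c p *\<^sub>R X2 p"
    and br12: "\<forall>p\<in>U. lie X1 X2 p = c112 p *\<^sub>R X1 p + c212 p *\<^sub>R X2 p + X3 p"
    and coframe: "\<forall>p\<in>U. \<forall>i\<in>{1,2,3}. linear (\<theta> i p)
                     \<and> \<theta> i p (X1 p) = (if i = 1 then 1 else 0)
                     \<and> \<theta> i p (X2 p) = (if i = 2 then 1 else 0)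
                     \<and> \<theta> i p (X3 p) = (if i = 3 then 1 else 0)"
begin

lemma X_differentiable: "p \<in> U \<Longrightarrow> X \<in> {X1, X2, X3} \<Longrightarrow> X differentiable (at p)"
  using smooth_on_differentiable_at[OF _ U_open] X_smooth by blast

lemma coframe_decomposition:
  assumes "p \<in> U"
  shows "v = \<theta> 1 p v *\<^sub>R X1 p + \<theta> 2 p v *\<^sub>R X2 p + \<theta> 3 p v *\<^sub>R X3 p"
proof -
  obtain s1 s2 s3 where v: "v = s1 *\<^sub>R X1 p + s2 *\<^sub>R X2 p + s3 *\<^sub>R X3 p"
    using independent3_spanningE[of "X1 p" "X2 p" "X3 p" v] frame assms by blast
  have "\<theta> i p v = (if i = 1 then s1 else if i = 2 then s2 else s3)" if "i \<in> {1,2,3}" for i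
  proof -
    have "linear (\<theta> i p)" using coframe assms that by blast
    then show ?thesis
      unfolding v using coframe assms that by (auto simp: linear_add linear_scale)
  qed
  then show ?thesis using v by simp
qed

lemma linear_coframe_expansion:
  assumes "p \<in> U" "linear L"
  shows "L v = \<theta> 1 p v * L (X1 p) + \<theta> 2 p v * L (X2 p) + \<theta> 3 p v * L (X3 p)"
proof -
  have "L v = L (\<theta> 1 p v *\<^sub>R X1 p + \<theta> 2 p v *\<^sub>R X2 p + \<theta> 3 p v *\<^sub>R X3 p)"
    by (rule arg_cong[OF coframe_decomposition[OF assms(1)]])
  then show ?thesis by (simp add: linear_add[OF assms(2)] linear_scale[OF assms(2)])
qed

lemma bilinear_coframe_expansion:
  assumes "p \<in> U" "bilinear B" "\<And>u. B u u = 0"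
  shows "B u v = wedge (\<theta> 1) (\<theta> 2) p u v * B (X1 p) (X2 p)
               + wedge (\<theta> 1) (\<theta> 3) p u v * B (X1 p) (X3 p)
               + wedge (\<theta> 2) (\<theta> 3) p u v * B (X2 p) (X3 p)"
proof -
  have "B u v = B (\<theta> 1 p u *\<^sub>R X1 p + \<theta> 2 p u *\<^sub>R X2 p + \<theta> 3 p u *\<^sub>R X3 p)
                  (\<theta> 1 p v *\<^sub>R X1 p + \<theta> 2 p v *\<^sub>R X2 p + \<theta> 3 p v *\<^sub>R X3 p)"
    by (rule arg_cong2[OF coframe_decomposition[OF assms(1)] coframe_decomposition[OF assms(1)]])
  then show ?thesis
    using bilinear_alternating_antisym[OF assms(2,3), of "X1 p" "X2 p"]
      bilinear_alternating_antisym[OF assms(2,3), of "X1 p" "X3 p"]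
      bilinear_alternating_antisym[OF assms(2,3), of "X2 p" "X3 p"]
    by (simp add: bilinear_ladd[OF assms(2)] bilinear_radd[OF assms(2)] bilinear_lmul[OF assms(2)]
        bilinear_rmul[OF assms(2)] assms(3) wedge_def algebra_simps)
qed

definition beta3 :: "real^3 \<Rightarrow> real" where
  "beta3 p = (c212 p)\<^sup>2 - (c112 p)\<^sup>2 - vder X1 c212 p - vder X2 c112 p"

lemma linear_lie_frame:
  assumes "p \<in> U" "linear L"
  shows "L (lie X1 X2 p) = c112 p * L (X1 p) + c212 p * L (X2 p) + L (X3 p)"
    and "L (lie X1 X3 p) = c p * L (X1 p) + c213 p * L (X2 p)"
    and "L (lie X2 X3 p) = c123 p * L (X1 p) - c p * L (X2 p)"
  using assms br12 br13 br23
  by (simp_all add: linear_add[OF assms(2)] linear_diff[OF assms(2)] linear_scale[OF assms(2)])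

end

locale normal_cartan = contact_frame +
  fixes \<omega> :: "nat \<Rightarrow> real^3 \<Rightarrow> real^3 \<Rightarrow> real"
  assumes normal: "normal_adapted U \<omega> X1 X2"
begin

lemma omega_linear: "k \<in> {1..4} \<Longrightarrow> p \<in> U \<Longrightarrow> linear (\<omega> k p)"
  using conjunct1[OF normal[unfolded normal_adapted_def]] by blast

lemma omega_differentiable: "k \<in> {1..4} \<Longrightarrow> p \<in> U \<Longrightarrow> (\<lambda>q. \<omega> k q v) differentiable (at p)"
  using conjunct1[OF conjunct2[OF normal[unfolded normal_adapted_def]]]
    smooth_on_differentiable_at[OF _ U_open] by blast

lemma bilinear_curv: "k \<in> {1..4} \<Longrightarrow> p \<in> U \<Longrightarrow> bilinear (curv \<omega> k p)"
  unfolding curv_def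
  by (intro bilinear_add bilinear_d1[OF U_open] bilinear_gbr)
     (auto intro: omega_linear omega_differentiable)

lemma d1_omega_cartan:
  assumes "k \<in> {1..4}" "p \<in> U" "X \<in> {X1, X2, X3}" "Y \<in> {X1, X2, X3}"
  shows "d1 (\<omega> k) p (X p) (Y p)
           = vder X (\<lambda>q. \<omega> k q (Y q)) p - vder Y (\<lambda>q. \<omega> k q (X q)) p - \<omega> k p (lie X Y p)"
proof -
  have "\<forall>q\<in>U. linear (\<omega> k q)" using omega_linear assms(1) by blast
  then show ?thesis
    by (rule d1_cartan[OF U_open assms(2) _ omega_differentiable[OF assms(1,2)]
        X_differentiable[OF assms(2,3)] X_differentiable[OF assms(2,4)]])
qed

lemma omega_frame_differentiable:
  assumes "k \<in> {1..4}" "p \<in> U" "X \<in> {X1, X2, X3}"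
  shows "(\<lambda>q. \<omega> k q (X q)) differentiable (at p)"
proof -
  have "\<forall>q\<in>U. linear (\<omega> k q)" using omega_linear assms(1) by blast
  then show ?thesis
    by (rule differentiable_one_form_apply[OF U_open assms(2) _ omega_differentiable[OF assms(1,2)]
        X_differentiable[OF assms(2,3)]])
qed

lemma d1_omega_locally_const:
  assumes "k \<in> {1..4}" "p \<in> U" "X \<in> {X1, X2, X3}" "Y \<in> {X1, X2, X3}"
    and "\<forall>q\<in>U. \<omega> k q (X q) = \<omega> k p (X p)" "\<forall>q\<in>U. \<omega> k q (Y q) = \<omega> k p (Y p)"
  shows "d1 (\<omega> k) p (X p) (Y p) = - \<omega> k p (lie X Y p)"
proof -
  have vder_const: "vder Z (\<lambda>q. \<omega> k q (W q)) p = 0"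
    if "W \<in> {X1, X2, X3}" "\<forall>q\<in>U. \<omega> k q (W q) = \<omega> k p (W p)" for Z W
  proof -
    have "vder Z (\<lambda>q. \<omega> k q (W q)) p = vder Z (\<lambda>_. \<omega> k p (W p)) p"
      by (rule vder_transform_within_open[OF omega_frame_differentiable[OF assms(1,2) that(1)] U_open
            assms(2)]) (use that(2) in blast)
    then show ?thesis by (simp add: vder_def)
  qed
  show ?thesis
    using d1_omega_cartan[OF assms(1-4)] vder_const[OF assms(3,5)] vder_const[OF assms(4,6)] by simp
qed

lemma normalization_on_frame:
  assumes "p \<in> U"
  shows "k \<in> {1,2,3} \<Longrightarrow> \<omega> k p (X1 p) = (if k = 1 then 1 else 0)
                          \<and> \<omega> k p (X2 p) = (if k = 2 then 1 else 0)"
    and "\<omega> 3 p (X3 p) = 1"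
    and "m \<in> {1..4} \<Longrightarrow> curv \<omega> m p (X1 p) (X2 p) = 0"
    and "curv \<omega> 3 p (X1 p) (X3 p) = 0" "curv \<omega> 3 p (X2 p) (X3 p) = 0"
proof -
  have "\<exists>E3. \<forall>p\<in>U.
        (\<forall>k\<in>{1,2,3}. \<omega> k p (X1 p) = (if k = 1 then 1 else 0)
                     \<and> \<omega> k p (X2 p) = (if k = 2 then 1 else 0)
                     \<and> \<omega> k p (E3 p) = (if k = 3 then 1 else 0)) \<and>
        E3 p - lie X1 X2 p \<in> span {X1 p, X2 p} \<and>
        curvfun \<omega> (\<lambda>i. if i = 1 then X1 else if i = 2 then X2 else E3) p \<in> Ntilde"
    using normal unfolding normal_adapted_def by (elim conjE)
  then obtain E3 where
    \<omega>_E3: "\<And>k. k \<in> {1,2,3} \<Longrightarrow> \<omega> k p (X1 p) = (if k = 1 then 1 else 0)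
       \<and> \<omega> k p (X2 p) = (if k = 2 then 1 else 0) \<and> \<omega> k p (E3 p) = (if k = 3 then 1 else 0)"
    and E3_lie: "E3 p - lie X1 X2 p \<in> span {X1 p, X2 p}"
    and N: "curvfun \<omega> (\<lambda>i. if i = 1 then X1 else if i = 2 then X2 else E3) p \<in> Ntilde"
    using assms by blast
  \<comment> \<open>E3 agrees with X3 modulo span {X1, X2}, which is invisible to the alternating
     form Omega_3 once it vanishes on (X1, X2)\<close>
  have "lie X1 X2 p - X3 p \<in> span {X1 p, X2 p}"
    using br12 assms by (auto intro: span_add span_scale span_base)
  then have E3_X3: "E3 p - X3 p \<in> span {X1 p, X2 p}"
    using span_add[OF E3_lie] by fastforce
  show "k \<in> {1,2,3} \<Longrightarrow> \<omega> k p (X1 p) = (if k = 1 then 1 else 0)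
                          \<and> \<omega> k p (X2 p) = (if k = 2 then 1 else 0)"
    using \<omega>_E3 by blast
  have "\<omega> 3 p (E3 p - X3 p) = 0"
    using linear_eq_0_on_span[OF omega_linear[OF _ assms] _ E3_X3, of 3] \<omega>_E3[of 3] by auto
  then show "\<omega> 3 p (X3 p) = 1"
    using \<omega>_E3[of 3] by (simp add: linear_diff[OF omega_linear[OF _ assms]])
  show curv12: "curv \<omega> m p (X1 p) (X2 p) = 0" if "m \<in> {1..4}" for m
    using Ntilde_components(1)[OF N that] by (simp add: curvfun_def)
  have "curv \<omega> 3 p (X1 p) (E3 p) = 0" "curv \<omega> 3 p (X2 p) (E3 p) = 0"
    using Ntilde_components(2,3)[OF N] by (simp_all add: curvfun_def)
  then show "curv \<omega> 3 p (X1 p) (X3 p) = 0" "curv \<omega> 3 p (X2 p) (X3 p) = 0"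
    using bilinear_alternating_span_invariant[OF bilinear_curv[OF _ assms] curv_self curv12 E3_X3]
    by auto
qed

lemma omega12_X3:
  assumes "p \<in> U"
  shows "\<omega> 1 p (X3 p) = 0 \<and> \<omega> 2 p (X3 p) = 0"
proof -
  have const: "\<forall>q\<in>U. \<omega> 3 q (Z q) = \<omega> 3 p (Z p)" if "Z \<in> {X1, X2, X3}" for Z
    using normalization_on_frame(1)[of _ 3] normalization_on_frame(2) assms that by auto
  have "d1 (\<omega> 3) p (X p) (X3 p) = - \<omega> 3 p (lie X X3 p)" if "X \<in> {X1, X2}" for X
    using that by (intro d1_omega_locally_const[of 3 p X X3] const assms) auto
  then have "d1 (\<omega> 3) p (X1 p) (X3 p) = 0" "d1 (\<omega> 3) p (X2 p) (X3 p) = 0"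
    using linear_lie_frame(2,3)[OF assms omega_linear[of 3 p]] normalization_on_frame(1)[OF assms, of 3]
      assms by simp_all
  then show ?thesis
    using normalization_on_frame(4,5)[OF assms] normalization_on_frame(1)[OF assms]
    by (simp add: curv_structure_equations wedge_def del: One_nat_def)
qed

lemma omega_on_frame:
  assumes "p \<in> U" "k \<in> {1,2,3}"
  shows "\<omega> k p (X1 p) = (if k = 1 then 1 else 0) \<and> \<omega> k p (X2 p) = (if k = 2 then 1 else 0)
           \<and> \<omega> k p (X3 p) = (if k = 3 then 1 else 0)"
  using normalization_on_frame(1)[OF assms(1)] normalization_on_frame(2)[OF assms(1)]
    omega12_X3[OF assms(1)] assms(2) by auto

lemma omega_eq_theta:
  assumes "p \<in> U" "k \<in> {1,2,3}"
  shows "\<omega> k p v = \<theta> k p v"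
proof -
  have "linear (\<omega> k p)" using omega_linear assms by auto
  then show ?thesis
    using linear_coframe_expansion[OF assms(1), of "\<omega> k p" v] omega_on_frame[OF assms] assms(2) by auto
qed

lemma d1_omega_frame:
  assumes "k \<in> {1,2,3}" "p \<in> U" "X \<in> {X1, X2, X3}" "Y \<in> {X1, X2, X3}"
  shows "d1 (\<omega> k) p (X p) (Y p) = - \<omega> k p (lie X Y p)"
proof -
  have const: "\<forall>q\<in>U. \<omega> k q (Z q) = \<omega> k p (Z p)" if "Z \<in> {X1, X2, X3}" for Z
    using omega_on_frame[OF _ assms(1)] assms(2) that by auto
  show ?thesis
    using assms by (intro d1_omega_locally_const[of k p X Y] const) auto
qed

lemma omega4_X1_X2:
  assumes "p \<in> U"
  shows "\<omega> 4 p (X1 p) = c112 p \<and> \<omega> 4 p (X2 p) = - c212 p"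
proof -
  have "d1 (\<omega> k) p (X1 p) (X2 p) = - \<omega> k p (lie X1 X2 p)" if "k \<in> {1,2}" for k
    using d1_omega_frame[of k p X1 X2] that assms by auto
  then show ?thesis
    using normalization_on_frame(3)[OF assms, of 1] normalization_on_frame(3)[OF assms, of 2]
      linear_lie_frame(1)[OF assms omega_linear[of 1 p]] linear_lie_frame(1)[OF assms omega_linear[of 2 p]]
      omega_on_frame[OF assms, of 1] omega_on_frame[OF assms, of 2] assms
    by (simp add: curv_structure_equations wedge_def del: One_nat_def)
qed

lemma omega4_X3:
  assumes "p \<in> U" "c212 differentiable (at p)"
  shows "\<omega> 4 p (X3 p) = beta3 p"
proof -
  have "vder X1 (\<lambda>q. \<omega> 4 q (X2 q)) p = - vder X1 c212 p"
    using vder_transform_within_open[OF omega_frame_differentiable[of 4 p X2] U_open assms(1),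
        of "\<lambda>q. - c212 q"] vder_minus[OF assms(2)] omega4_X1_X2 assms(1) by simp
  moreover have "vder X2 (\<lambda>q. \<omega> 4 q (X1 q)) p = vder X2 c112 p"
    using vder_transform_within_open[OF omega_frame_differentiable[of 4 p X1] U_open assms(1),
        of c112] omega4_X1_X2 assms(1) by simp
  ultimately have "d1 (\<omega> 4) p (X1 p) (X2 p)
      = - vder X1 c212 p - vder X2 c112 p - \<omega> 4 p (lie X1 X2 p)"
    using d1_omega_cartan[of 4 p X1 X2] assms(1) by simp
  then show ?thesis
    using normalization_on_frame(3)[OF assms(1), of 4] linear_lie_frame(1)[OF assms(1) omega_linear[of 4 p]]
      omega4_X1_X2[OF assms(1)] assms(1)
    by (simp add: curv_structure_equations beta3_def power2_eq_square del: One_nat_def)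
qed

lemma curv_on_frame:
  assumes "p \<in> U"
  shows "curv \<omega> 1 p (X1 p) (X3 p) = - c p"
    and "curv \<omega> 1 p (X2 p) (X3 p) = - c123 p - \<omega> 4 p (X3 p)"
    and "curv \<omega> 2 p (X1 p) (X3 p) = - c213 p - \<omega> 4 p (X3 p)"
    and "curv \<omega> 2 p (X2 p) (X3 p) = c p"
proof -
  have "d1 (\<omega> k) p (X p) (X3 p) = - \<omega> k p (lie X X3 p)" if "k \<in> {1,2}" "X \<in> {X1, X2}" for k X
    using d1_omega_frame[of k p X X3] that assms by auto
  then show "curv \<omega> 1 p (X1 p) (X3 p) = - c p"
    and "curv \<omega> 1 p (X2 p) (X3 p) = - c123 p - \<omega> 4 p (X3 p)"
    and "curv \<omega> 2 p (X1 p) (X3 p) = - c213 p - \<omega> 4 p (X3 p)"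
    and "curv \<omega> 2 p (X2 p) (X3 p) = c p"
    using linear_lie_frame(2,3)[OF assms omega_linear[of 1 p]] linear_lie_frame(2,3)[OF assms omega_linear[of 2 p]]
      omega_on_frame[OF assms, of 1] omega_on_frame[OF assms, of 2] omega4_X1_X2[OF assms] omega12_X3[OF assms]
      assms
    by (simp_all add: curv_structure_equations wedge_def del: One_nat_def)
qed

lemma omega4_in_coframe:
  assumes "p \<in> U" "c212 differentiable (at p)"
  shows "\<omega> 4 p v = c112 p * \<theta> 1 p v - c212 p * \<theta> 2 p v + beta3 p * \<theta> 3 p v"
  using linear_coframe_expansion[OF assms(1) omega_linear[of 4 p], of v] omega4_X1_X2[OF assms(1)]
    omega4_X3[OF assms] assms(1)
  by simp

lemma curv_coframe_expansion:
  assumes "p \<in> U" "k \<in> {1,2,3}"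
  shows "curv \<omega> k p u v = wedge (\<theta> 1) (\<theta> 3) p u v * curv \<omega> k p (X1 p) (X3 p)
                         + wedge (\<theta> 2) (\<theta> 3) p u v * curv \<omega> k p (X2 p) (X3 p)"
proof -
  have k: "k \<in> {1..4}" using assms(2) by auto
  show ?thesis
    using bilinear_coframe_expansion[OF assms(1) bilinear_curv[OF k assms(1)] curv_self, of u v]
      normalization_on_frame(3)[OF assms(1) k]
    by simp
qed

lemma curv_in_coframe:
  assumes "p \<in> U" "c212 differentiable (at p)"
  shows "curv \<omega> 1 p u v = - c p * wedge (\<theta> 1) (\<theta> 3) p u v
                          - (c123 p + beta3 p) * wedge (\<theta> 2) (\<theta> 3) p u v"
    and "curv \<omega> 2 p u v = - (c213 p + beta3 p) * wedge (\<theta> 1) (\<theta> 3) p u v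
                          + c p * wedge (\<theta> 2) (\<theta> 3) p u v"
    and "curv \<omega> 3 p u v = 0"
  using curv_coframe_expansion[OF assms(1), of 1 u v] curv_coframe_expansion[OF assms(1), of 2 u v]
    curv_coframe_expansion[OF assms(1), of 3 u v] curv_on_frame[OF assms(1)]
    normalization_on_frame(4,5)[OF assms(1)] omega4_X3[OF assms]
  by (simp_all add: algebra_simps del: One_nat_def)

end

theorem mainTheorem5:
  fixes U :: "(real^3) set"
    and X1 X2 X3 :: "real^3 \<Rightarrow> real^3"
    and c c213 c123 c112 c212 :: "real^3 \<Rightarrow> real"
    and \<theta> :: "nat \<Rightarrow> real^3 \<Rightarrow> real^3 \<Rightarrow> real"
    and \<omega> :: "nat \<Rightarrow> real^3 \<Rightarrow> real^3 \<Rightarrow> real"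
  assumes U_open: "open U"
    and X_smooth: "smooth_on U X1" "smooth_on U X2" "smooth_on U X3"
    and frame: "\<forall>p\<in>U. \<forall>a b d. a *\<^sub>R X1 p + b *\<^sub>R X2 p + d *\<^sub>R X3 p = 0 \<longrightarrow> a = 0 \<and> b = 0 \<and> d = 0"
    and br13: "\<forall>p\<in>U. lie X1 X3 p = c p *\<^sub>R X1 p + c213 p *\<^sub>R X2 p"
    and br23: "\<forall>p\<in>U. lie X2 X3 p = c123 p *\<^sub>R X1 p - c p *\<^sub>R X2 p"
    and br12: "\<forall>p\<in>U. lie X1 X2 p = c112 p *\<^sub>R X1 p + c212 p *\<^sub>R X2 p + X3 p"
    and c_smooth: "smooth_on U c" "smooth_on U c213" "smooth_on U c123"
                  "smooth_on U c112" "smooth_on U c212"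
    and coframe: "\<forall>p\<in>U. \<forall>i\<in>{1,2,3}. linear (\<theta> i p)
                     \<and> \<theta> i p (X1 p) = (if i = 1 then 1 else 0)
                     \<and> \<theta> i p (X2 p) = (if i = 2 then 1 else 0)
                     \<and> \<theta> i p (X3 p) = (if i = 3 then 1 else 0)"
    and \<theta>_smooth: "\<forall>i\<in>{1,2,3}. \<forall>v. smooth_on U (\<lambda>p. \<theta> i p v)"
    and normal: "normal_adapted U \<omega> X1 X2"
  shows "let \<beta>1 = c112; \<beta>2 = (\<lambda>p. - c212 p);
             \<beta>3 = (\<lambda>p. (c212 p)\<^sup>2 - (c112 p)\<^sup>2 - vder X1 c212 p - vder X2 c112 p)
         in (\<forall>p\<in>U. \<forall>v.
               \<omega> 1 p v = \<theta> 1 p v \<and> \<omega> 2 p v = \<theta> 2 p v \<and> \<omega> 3 p v = \<theta> 3 p v \<and>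
               \<omega> 4 p v = \<beta>1 p * \<theta> 1 p v + \<beta>2 p * \<theta> 2 p v + \<beta>3 p * \<theta> 3 p v)
          \<and> (\<forall>p\<in>U. \<forall>u v.
               curv \<omega> 1 p u v = - c p * wedge (\<theta> 1) (\<theta> 3) p u v
                                 - (c123 p + \<beta>3 p) * wedge (\<theta> 2) (\<theta> 3) p u v \<and>
               curv \<omega> 2 p u v = - (c213 p + \<beta>3 p) * wedge (\<theta> 1) (\<theta> 3) p u v
                                 + c p * wedge (\<theta> 2) (\<theta> 3) p u v \<and>
               curv \<omega> 3 p u v = 0)"
proof -
  interpret normal_cartan U X1 X2 X3 c c213 c123 c112 c212 \<theta> \<omega>
    by unfold_locales (fact assms)+
  have "c212 differentiable (at p)" if "p \<in> U" for p
    using smooth_on_differentiable_at[OF c_smooth(5) U_open that] .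
  then show ?thesis
    unfolding Let_def using omega_eq_theta omega4_in_coframe curv_in_coframe
    by (simp add: beta3_def del: One_nat_def)
qed

end
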